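(* Let $G$ be a finite group with $m^*(G) = |G|$. Then $G$ contains no non-trivial normal cyclic subgroups.
   Context: For $H \leq G$, $m_G(H) = |H|\,|C_G(H)|$ and $m^*(G) = \max\{ m_G(H) : H \leq G\}$. *)

theory Defs
  imports "HOL-Algebra.Algebra"
begin

definition centralizer :: "('a, 'b) monoid_scheme \<Rightarrow> 'a set \<Rightarrow> 'a set" where
  "centralizer G H = {g \<in> carrier G. \<forall>h\<in>H. g \<otimes>\<^bsub>G\<^esub> h = h \<otimes>\<^bsub>G\<^esub> g}"

definition mG :: "('a, 'b) monoid_scheme \<Rightarrow> 'a set \<Rightarrow> nat" where
  "mG G H = card H * card (centralizer G H)"

definition m_star :: "('a, 'b) monoid_scheme \<Rightarrow> nat" where
  "m_star G = Max {mG G H | H. subgroup H G}"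

end

theory Submission
  imports Defs
begin

text \<open>Suppose \<open>N = \<langle>x\<rangle>\<close> is a non-trivial normal cyclic subgroup. Every element of \<open>G\<close>
  commuting with \<open>x\<close> commutes with all of \<open>N\<close>, so \<open>C\<^sub>G(x) = C\<^sub>G(N)\<close>, while the conjugacy class
  of \<open>x \<noteq> 1\<close> lies in \<open>N - {1}\<close>. The orbit-stabilizer theorem for conjugation then gives
  \<open>|G| = |x\<^sup>G| |C\<^sub>G(x)| \<le> (|N| - 1) |C\<^sub>G(N)| < m\<^sub>G(N) \<le> m\<^sup>*(G)\<close>.\<close>

definition conjugacy_class :: "('a, 'b) monoid_scheme \<Rightarrow> 'a \<Rightarrow> 'a set" where
  "conjugacy_class G x = {g \<otimes>\<^bsub>G\<^esub> x \<otimes>\<^bsub>G\<^esub> inv\<^bsub>G\<^esub> g | g. g \<in> carrier G}"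

lemma (in group) subgroup_centralizer:
  assumes "S \<subseteq> carrier G"
  shows "subgroup (centralizer G S) G"
proof (rule subgroupI)
  fix a assume a: "a \<in> centralizer G S"
  show "inv a \<in> centralizer G S"
    unfolding centralizer_def
  proof (intro CollectI conjI ballI)
    fix h assume "h \<in> S"
    with a assms have a_G: "a \<in> carrier G" and h_G: "h \<in> carrier G" and comm: "a \<otimes> h = h \<otimes> a"
      by (auto simp: centralizer_def)
    have "inv a \<otimes> h = inv a \<otimes> (h \<otimes> a) \<otimes> inv a"
      using a_G h_G by (simp add: m_assoc)
    also have "\<dots> = h \<otimes> inv a"
      using a_G h_G by (simp flip: comm add: m_assoc[symmetric])
    finally show "inv a \<otimes> h = h \<otimes> inv a" .
  qed (use a in \<open>auto simp: centralizer_def\<close>)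
next
  fix a b assume "a \<in> centralizer G S" "b \<in> centralizer G S"
  then show "a \<otimes> b \<in> centralizer G S"
    using assms by (auto simp: centralizer_def m_assoc) (metis m_assoc subsetD)
qed (use assms in \<open>auto simp: centralizer_def intro!: exI[of _ \<one>]\<close>)

lemma (in group) centralizer_generate:
  assumes "S \<subseteq> carrier G"
  shows "centralizer G (generate G S) = centralizer G S"
proof
  show "centralizer G (generate G S) \<subseteq> centralizer G S"
    using generate.incl[of _ S G] by (auto simp: centralizer_def)
next
  show "centralizer G S \<subseteq> centralizer G (generate G S)"
  proof
    fix g assume g: "g \<in> centralizer G S"
    then have "S \<subseteq> centralizer G {g}"
      using assms by (auto simp: centralizer_def)
    moreover have "subgroup (centralizer G {g}) G"
      using g by (intro subgroup_centralizer) (auto simp: centralizer_def)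
    ultimately have "generate G S \<subseteq> centralizer G {g}"
      by (rule generate_subgroup_incl)
    with g show "g \<in> centralizer G (generate G S)"
      by (auto simp: centralizer_def)
  qed
qed

lemma (in group) cyclic_subgroup_generated_imp_generate:
  assumes "subgroup N G" and "cyclic_group (subgroup_generated G N)"
  obtains x where "x \<in> N" and "generate G {x} = N"
proof -
  let ?H = "subgroup_generated G N"
  have carrier_H: "carrier ?H = N"
    using assms(1) by (rule subgroup.carrier_subgroup_generated_subgroup)
  then obtain x where x: "x \<in> N" and "subgroup_generated ?H {x} = ?H"
    using assms(2) unfolding cyclic_group_def by auto
  then have "generate ?H {x} = N"
    using carrier_H by (metis carrier_subgroup_generated inf.absorb2 empty_subsetI insert_subset)
  moreover have "?H = G\<lparr>carrier := N\<rparr>"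
    using carrier_H by (simp add: subgroup_generated_def)
  ultimately have "generate G {x} = N"
    using generate_consistent[of "{x}" N] x assms(1) by simp
  with x show thesis by (rule that)
qed

lemma (in group) card_conjugacy_class_mult_centralizer:
  assumes "x \<in> carrier G"
  shows "card (conjugacy_class G x) * card (centralizer G {x}) = order G"
proof -
  let ?\<phi> = "\<lambda>g. \<lambda>h \<in> carrier G. g \<otimes> h \<otimes> inv g"
  interpret group_action G "carrier G" ?\<phi>
    by (rule action_by_conjugation)
  have "orbit G ?\<phi> x = conjugacy_class G x"
    using assms by (auto simp: orbit_def conjugacy_class_def)
  moreover have "stabilizer G ?\<phi> x = centralizer G {x}"
    using assms by (auto simp: stabilizer_def centralizer_def inv_solve_right')
  ultimately show ?thesis
    using orbit_stabilizer_theorem[OF assms] by (simp only:)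
qed

lemma (in group) conjugacy_class_subset_normal:
  assumes "N \<lhd> G" and "x \<in> N" and "x \<noteq> \<one>"
  shows "conjugacy_class G x \<subseteq> N - {\<one>}"
proof
  fix y assume "y \<in> conjugacy_class G x"
  then obtain g where g: "g \<in> carrier G" and y: "y = g \<otimes> x \<otimes> inv g"
    unfolding conjugacy_class_def by blast
  have x: "x \<in> carrier G"
    using subgroup.mem_carrier[OF normal_imp_subgroup[OF assms(1)] assms(2)] .
  have "y \<in> N"
    using y normal.inv_op_closed2[OF assms(1) g assms(2)] by simp
  moreover have "y \<noteq> \<one>"
  proof
    assume "y = \<one>"
    then have "g \<otimes> x \<otimes> inv g = g \<otimes> \<one> \<otimes> inv g"
      using y g by simp
    with assms(3) show False
      using conjugation_is_inj[OF g x one_closed] by blast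
  qed
  ultimately show "y \<in> N - {\<one>}" by simp
qed

lemma mG_le_m_star:
  assumes "finite (carrier G)" and "subgroup H G"
  shows "mG G H \<le> m_star G"
  unfolding m_star_def
proof (rule Max_ge)
  have "{mG G H | H. subgroup H G} \<subseteq> mG G ` Pow (carrier G)"
    using subgroup.subset by blast
  then show "finite {mG G H | H. subgroup H G}"
    using assms(1) finite_subset by blast
  show "mG G H \<in> {mG G H | H. subgroup H G}"
    using assms(2) by blast
qed

lemma (in group) order_less_mG_normal_cyclic:
  assumes "finite (carrier G)" and "N \<lhd> G" and "x \<in> N" and "x \<noteq> \<one>"
    and "generate G {x} = N"
  shows "order G < mG G N"
proof -
  let ?C = "centralizer G N"
  have N: "subgroup N G"
    using assms(2) by (rule normal_imp_subgroup)
  have x: "x \<in> carrier G"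
    using subgroup.mem_carrier[OF N assms(3)] .
  have "finite N"
    using finite_subset[OF subgroup.subset[OF N] assms(1)] .
  have "card N > 0"
    using \<open>finite N\<close> assms(3) card_gt_0_iff by blast
  have "card ?C > 0"
    using assms(1) subgroup.one_closed[OF subgroup_centralizer[OF subgroup.subset[OF N]]]
    by (auto simp: card_gt_0_iff centralizer_def)
  have "?C = centralizer G {x}"
    using centralizer_generate[of "{x}"] x assms(5) by simp
  then have "order G = card (conjugacy_class G x) * card ?C"
    using card_conjugacy_class_mult_centralizer[OF x] by simp
  also have "\<dots> \<le> card (N - {\<one>}) * card ?C"
    using card_mono[OF _ conjugacy_class_subset_normal[OF assms(2-4)]] \<open>finite N\<close> by simp
  also have "\<dots> = (card N - 1) * card ?C"
    using \<open>finite N\<close> subgroup.one_closed[OF N] by (simp add: card_Diff_singleton)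
  also have "\<dots> < card N * card ?C"
    using \<open>card N > 0\<close> \<open>card ?C > 0\<close> by simp
  finally show ?thesis
    by (simp add: mG_def)
qed

theorem proposition6:
  fixes G :: "('a, 'b) monoid_scheme"
  assumes "group G" and "finite (carrier G)" and "m_star G = order G"
  shows "\<forall>N. N \<lhd> G \<and> cyclic_group (subgroup_generated G N) \<longrightarrow> N = {\<one>\<^bsub>G\<^esub>}"
proof (intro allI impI)
  interpret group G by (fact assms(1))
  fix N assume N: "N \<lhd> G \<and> cyclic_group (subgroup_generated G N)"
  then have subgroup_N: "subgroup N G"
    using normal_imp_subgroup by blast
  then obtain x where x: "x \<in> N" and gen: "generate G {x} = N"
    using N cyclic_subgroup_generated_imp_generate by blast
  show "N = {\<one>\<^bsub>G\<^esub>}"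
  proof (cases "x = \<one>\<^bsub>G\<^esub>")
    case True
    then show ?thesis
      using gen generate_one by simp
  next
    case False
    then have "m_star G < mG G N"
      using order_less_mG_normal_cyclic[OF assms(2)] N x gen assms(3) by simp
    with mG_le_m_star[OF assms(2) subgroup_N] show ?thesis
      by simp
  qed
qed

end
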